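(* Consider the common support-set model described in the context with $J=T$, let $h\ge1$, $m\ge0$, and let $\mathsf p_1,\dots,\mathsf p_h,\mathsf q_1,\dots,\mathsf q_{m+1}$ be distinct sensors. Then (whenever the conditioning events have positive probability) $$\Pr\Big(i\in\mathcal J\ \Big|\ i\in\bigcap_{l=1}^{h}\hat{\mathcal T}_{\mathsf p_l},\ i\in\bigcap_{l=1}^{m}\hat{\mathcal T}_{\mathsf q_l}^{\complement}\Big)\ \ge\ \Pr\Big(i\in\mathcal J\ \Big|\ i\in\bigcap_{l=1}^{h-1}\hat{\mathcal T}_{\mathsf p_l},\ i\in\bigcap_{l=1}^{m+1}\hat{\mathcal T}_{\mathsf q_l}^{\complement}\Big).$$
   Context: Let $N>T\ge1$ be integers and $\Omega=\{1,\dots,N\}$; complements are taken in $\Omega$. A finite set $\mathcal L$ of sensors is given. Common support-set model: every sensor $\mathsf p\in\mathcal L$ has the same fixed true support set $\mathcal T_{\mathsf p}=\mathcal J\subseteq\Omega$ with $|\mathcal J|=J=T$. Each sensor has a random estimated support set $\hat{\mathcal T}_{\mathsf p}\subseteq\Omega$. A random index $i$ is uniformly distributed on $\Omega$ and independent of all estimates. System model: there is $\epsilon$ with $0\le\epsilon\le (N-T)/N$, common to all sensors, such that for every sensor $\mathsf p$ and every $j\in\Omega$, $\Pr(j\in\hat{\mathcal T}_{\mathsf p})=1-\epsilon$ if $j\in\mathcal T_{\mathsf p}$ and $\Pr(j\in\hat{\mathcal T}_{\mathsf p})=\frac{T}{N-T}\epsilon$ if $j\notin\mathcal T_{\mathsf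 p}$ (so $\Pr(i\in\hat{\mathcal T}_{\mathsf p})=T/N$, detection probability $1-\epsilon$, miss probability $\epsilon$, false-alarm probability $\frac{T}{N-T}\epsilon$). For each fixed $j\in\Omega$, the events $\{j\in\hat{\mathcal T}_{\mathsf p}\}$, $\mathsf p\in\mathcal L$, are mutually independent. *)

theory Defs
  imports "HOL-Probability.Probability"
begin

end

theory Submission
  imports Defs
begin

text \<open>
  Conditioned on the index \<open>i\<close> the sensors decide independently, each reporting \<open>i\<close> with
  probability \<open>a = 1 - \<epsilon>\<close> if \<open>i \<in> J\<close> and \<open>b = T \<epsilon> / (N - T)\<close> otherwise. Hence, after \<open>h\<close> reports
  and \<open>m\<close> non-reports, the posterior of \<open>i \<in> J\<close> is \<open>X / (X + Y)\<close> with
  \<open>X = (T/N) a\<^sup>h (1-a)\<^sup>m\<close> and \<open>Y = ((N-T)/N) b\<^sup>h (1-b)\<^sup>m\<close>. Turning one report into a non-report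
  multiplies \<open>X/Y\<close> by \<open>(1-a) b / (a (1-b))\<close>, which is at most \<open>1\<close> because the model bound on
  \<open>\<epsilon>\<close> is exactly \<open>b \<le> a\<close>.
\<close>

lemma (in prob_space) indep_events_prob_hits_misses:
  assumes indep: "indep_events A I"
    and "P \<subseteq> I" "Q \<subseteq> I" "P \<inter> Q = {}" "finite P" "finite Q"
  shows "prob (space M \<inter> (\<Inter>s\<in>P. A s) \<inter> (\<Inter>s\<in>Q. space M - A s))
           = (\<Prod>s\<in>P. prob (A s)) * (\<Prod>s\<in>Q. 1 - prob (A s))"
proof (cases "P \<union> Q = {}")
  case True
  then show ?thesis by (simp add: prob_space)
next
  case False
  define F where "F s = (if s \<in> P then A s else space M - A s)" for s
  have A_ev: "s \<in> I \<Longrightarrow> A s \<in> events" for s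
    using indep by (auto simp: indep_events_def)
  have "indep_sets (\<lambda>s. sigma_sets (space M) {A s}) I"
    using indep A_ev
    by (intro indep_sets_sigma) (auto simp: indep_events_def_alt Int_stable_def)
  moreover have "\<forall>s\<in>P \<union> Q. F s \<in> sigma_sets (space M) {A s}"
    by (auto simp: F_def intro: sigma_sets.Compl)
  ultimately have "prob (\<Inter>s\<in>P \<union> Q. F s) = (\<Prod>s\<in>P \<union> Q. prob (F s))"
    using assms False by (intro indep_setsD) auto
  moreover have "(\<Inter>s\<in>P \<union> Q. F s) = space M \<inter> (\<Inter>s\<in>P \<union> Q. F s)"
  proof -
    obtain s0 where "s0 \<in> P \<union> Q" using False by blast
    moreover have "F s0 \<subseteq> space M"
      using sets.sets_into_space[OF A_ev[of s0]] \<open>P \<subseteq> I\<close> by (auto simp: F_def)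
    ultimately show ?thesis by blast
  qed
  moreover have "space M \<inter> (\<Inter>s\<in>P \<union> Q. F s) = space M \<inter> (\<Inter>s\<in>P. A s) \<inter> (\<Inter>s\<in>Q. space M - A s)"
    using \<open>P \<inter> Q = {}\<close> by (auto simp: F_def)
  moreover have "(\<Prod>s\<in>P \<union> Q. prob (F s)) = (\<Prod>s\<in>P. prob (F s)) * (\<Prod>s\<in>Q. prob (F s))"
    using assms by (intro prod.union_disjoint) auto
  moreover have "(\<Prod>s\<in>P. prob (F s)) = (\<Prod>s\<in>P. prob (A s))"
    by (rule prod.cong) (auto simp: F_def)
  moreover have "(\<Prod>s\<in>Q. prob (F s)) = (\<Prod>s\<in>Q. 1 - prob (A s))"
    using assms A_ev by (intro prod.cong) (auto simp: F_def prob_compl)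
  ultimately show ?thesis by simp
qed

lemma sigma_sets_hits_misses:
  assumes "G \<subseteq> Pow \<Omega>" "A ` (P \<union> Q) \<subseteq> G" "finite P" "finite Q"
  shows "\<Omega> \<inter> (\<Inter>s\<in>P. A s) \<inter> (\<Inter>s\<in>Q. \<Omega> - A s) \<in> sigma_sets \<Omega> G"
proof -
  interpret sigma_algebra \<Omega> "sigma_sets \<Omega> G"
    using assms(1) by (rule sigma_algebra_sigma_sets)
  have "\<Omega> \<inter> (\<Inter>s\<in>P. A s) \<inter> (\<Inter>s\<in>Q. \<Omega> - A s) = \<Omega> - (\<Union>s\<in>P. \<Omega> - A s) - (\<Union>s\<in>Q. A s)"
    by auto
  also have "\<dots> \<in> sigma_sets \<Omega> G"
    using assms by (intro Diff finite_UN top) auto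
  finally show ?thesis .
qed

definition bayes_posterior :: "real \<Rightarrow> real \<Rightarrow> real \<Rightarrow> nat \<Rightarrow> nat \<Rightarrow> real" where
  "bayes_posterior t a b h m =
     t * a ^ h * (1 - a) ^ m / (t * a ^ h * (1 - a) ^ m + (1 - t) * b ^ h * (1 - b) ^ m)"

lemma bayes_posterior_hit_to_miss_le:
  fixes t a b :: real
  assumes "0 \<le> t" "t \<le> 1" "0 \<le> b" "b \<le> a" "a \<le> 1"
    and pos: "0 < t * a ^ Suc h * (1 - a) ^ m + (1 - t) * b ^ Suc h * (1 - b) ^ m"
  shows "bayes_posterior t a b h (Suc m) \<le> bayes_posterior t a b (Suc h) m"
proof -
  define X1 Y1 where "X1 = t * a ^ Suc h * (1 - a) ^ m" and "Y1 = (1 - t) * b ^ Suc h * (1 - b) ^ m"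
  define X2 Y2 where "X2 = t * a ^ h * (1 - a) ^ Suc m" and "Y2 = (1 - t) * b ^ h * (1 - b) ^ Suc m"
  define c where "c = t * (1 - t) * a ^ h * (1 - a) ^ m * b ^ h * (1 - b) ^ m"
  have "X1 * Y2 - X2 * Y1 = c * (a * (1 - b) - (1 - a) * b)"
    by (simp add: X1_def Y1_def X2_def Y2_def c_def algebra_simps)
  also have "\<dots> \<ge> 0"
  proof (rule mult_nonneg_nonneg)
    show "0 \<le> c"
      using assms by (simp add: c_def)
    show "0 \<le> a * (1 - b) - (1 - a) * b"
      using assms by (simp add: algebra_simps)
  qed
  finally have cross: "X2 * Y1 \<le> X1 * Y2" by simp
  have "0 \<le> X1" "0 \<le> X2" "0 \<le> Y2" and pos': "0 < X1 + Y1"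
    using assms by (auto simp: X1_def X2_def Y2_def Y1_def)
  have "X2 / (X2 + Y2) \<le> X1 / (X1 + Y1)"
  proof (cases "X2 + Y2 = 0")
    case True
    then show ?thesis using \<open>0 \<le> X1\<close> pos' by simp
  next
    case False
    then have "0 < X2 + Y2" using \<open>0 \<le> X2\<close> \<open>0 \<le> Y2\<close> by linarith
    then show ?thesis using pos' cross by (simp add: divide_simps algebra_simps)
  qed
  then show ?thesis
    by (simp add: bayes_posterior_def X1_def Y1_def X2_def Y2_def)
qed

text \<open>The system model of the context.\<close>

locale common_support_model = prob_space M
  for M :: "'w measure" and N T :: nat and \<epsilon> :: real and L :: "'s set" and J :: "nat set"
    and That :: "'s \<Rightarrow> 'w \<Rightarrow> nat set" and i :: "'w \<Rightarrow> nat" +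
  assumes T_less_N: "T < N"
    and J_subset: "J \<subseteq> {1..N}" and card_J: "card J = T"
    and eps_nonneg: "0 \<le> \<epsilon>" and eps_le: "\<epsilon> \<le> real (N - T) / real N"
    and prob_detection: "\<And>s j. s \<in> L \<Longrightarrow> j \<in> J \<Longrightarrow>
           prob {\<omega> \<in> space M. j \<in> That s \<omega>} = 1 - \<epsilon>"
    and prob_false_alarm: "\<And>s j. s \<in> L \<Longrightarrow> j \<in> {1..N} - J \<Longrightarrow>
           prob {\<omega> \<in> space M. j \<in> That s \<omega>} = real T / real (N - T) * \<epsilon>"
    and indep_sensors: "\<And>j. j \<in> {1..N} \<Longrightarrow> indep_events (\<lambda>s. {\<omega> \<in> space M. j \<in> That s \<omega>}) L"
    and index_range: "\<And>\<omega>. \<omega> \<in> space M \<Longrightarrow> i \<omega> \<in> {1..N}"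
    and prob_index: "\<And>j. j \<in> {1..N} \<Longrightarrow> prob {\<omega> \<in> space M. i \<omega> = j} = 1 / real N"
    and indep_index: "indep_set
           (sigma_sets (space M) {{\<omega> \<in> space M. i \<omega> = j} | j. j \<in> {1..N}})
           (sigma_sets (space M) {{\<omega> \<in> space M. j \<in> That s \<omega>} | s j. s \<in> L \<and> j \<in> {1..N}})"
begin

definition detection :: real where "detection = 1 - \<epsilon>"

definition false_alarm :: real where "false_alarm = real T / real (N - T) * \<epsilon>"

definition hit_prob :: "nat \<Rightarrow> real" where
  "hit_prob j = (if j \<in> J then detection else false_alarm)"

lemma prob_hit: "s \<in> L \<Longrightarrow> j \<in> {1..N} \<Longrightarrow> prob {\<omega> \<in> space M. j \<in> That s \<omega>} = hit_prob j"
  using prob_detection prob_false_alarm by (simp add: hit_prob_def detection_def false_alarm_def)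

lemma false_alarm_le_detection: "false_alarm \<le> detection"
proof -
  have "real T * \<epsilon> \<le> real (N - T) * (1 - \<epsilon>)"
    using eps_le T_less_N by (simp add: field_simps)
  then show ?thesis
    using T_less_N by (simp add: detection_def false_alarm_def field_simps)
qed

lemma false_alarm_nonneg: "0 \<le> false_alarm"
  using eps_nonneg by (simp add: false_alarm_def)

lemma detection_le_1: "detection \<le> 1"
  using eps_nonneg by (simp add: detection_def)

lemma prob_index_hits_misses:
  assumes j: "j \<in> {1..N}" and "P \<subseteq> L" "Q \<subseteq> L" "P \<inter> Q = {}" "finite P" "finite Q"
  defines "S \<equiv> {\<omega> \<in> space M. i \<omega> = j \<and> (\<forall>s\<in>P. j \<in> That s \<omega>) \<and> (\<forall>s\<in>Q. j \<notin> That s \<omega>)}"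
  shows "S \<in> events"
    and "prob S = 1 / real N * (hit_prob j ^ card P * (1 - hit_prob j) ^ card Q)"
proof -
  define H where "H = (\<lambda>s. {\<omega> \<in> space M. j \<in> That s \<omega>})"
  define I where "I = {\<omega> \<in> space M. i \<omega> = j}"
  define E where "E = space M \<inter> (\<Inter>s\<in>P. H s) \<inter> (\<Inter>s\<in>Q. space M - H s)"
  have S_eq: "S = I \<inter> E"
    by (auto simp: S_def I_def E_def H_def)
  have I_sigma: "I \<in> sigma_sets (space M) {{\<omega> \<in> space M. i \<omega> = j} | j. j \<in> {1..N}}"
    using j by (auto simp: I_def)
  have E_sigma: "E \<in> sigma_sets (space M) {{\<omega> \<in> space M. j \<in> That s \<omega>} | s j. s \<in> L \<and> j \<in> {1..N}}"
    unfolding E_def using assms by (intro sigma_sets_hits_misses) (auto simp: H_def)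
  show "S \<in> events"
    using indep_setD_ev1[OF indep_index] indep_setD_ev2[OF indep_index] I_sigma E_sigma
    by (auto simp: S_eq)
  have "prob S = prob I * prob E"
    unfolding S_eq using indep_index I_sigma E_sigma by (rule indep_setD)
  also have "prob E = (\<Prod>s\<in>P. prob (H s)) * (\<Prod>s\<in>Q. 1 - prob (H s))"
    unfolding E_def using assms indep_sensors[OF j]
    by (intro indep_events_prob_hits_misses) (simp_all add: H_def)
  also have "\<dots> = (\<Prod>s\<in>P. hit_prob j) * (\<Prod>s\<in>Q. 1 - hit_prob j)"
    using assms prob_hit[OF _ j] by (intro arg_cong2[where f="(*)"] prod.cong) (auto simp: H_def)
  finally show "prob S = 1 / real N * (hit_prob j ^ card P * (1 - hit_prob j) ^ card Q)"
    using prob_index[OF j] by (simp add: I_def)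
qed

lemma prob_index_in_hits_misses:
  assumes "K \<subseteq> {1..N}" "P \<subseteq> L" "Q \<subseteq> L" "P \<inter> Q = {}" "finite P" "finite Q"
  shows "prob {\<omega> \<in> space M. i \<omega> \<in> K \<and> (\<forall>s\<in>P. i \<omega> \<in> That s \<omega>) \<and> (\<forall>s\<in>Q. i \<omega> \<notin> That s \<omega>)}
           = (\<Sum>j\<in>K. 1 / real N * (hit_prob j ^ card P * (1 - hit_prob j) ^ card Q))"
proof -
  define S where "S j = {\<omega> \<in> space M. i \<omega> = j \<and> (\<forall>s\<in>P. j \<in> That s \<omega>) \<and> (\<forall>s\<in>Q. j \<notin> That s \<omega>)}"
    for j
  have "{\<omega> \<in> space M. i \<omega> \<in> K \<and> (\<forall>s\<in>P. i \<omega> \<in> That s \<omega>) \<and> (\<forall>s\<in>Q. i \<omega> \<notin> That s \<omega>)}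
          = (\<Union>j\<in>K. S j)"
    by (auto simp: S_def)
  also have "prob \<dots> = (\<Sum>j\<in>K. prob (S j))"
    using assms prob_index_hits_misses(1) finite_subset[OF \<open>K \<subseteq> {1..N}\<close>]
    by (intro finite_measure_finite_Union) (auto simp: S_def disjoint_family_on_def)
  also have "\<dots> = (\<Sum>j\<in>K. 1 / real N * (hit_prob j ^ card P * (1 - hit_prob j) ^ card Q))"
    using assms prob_index_hits_misses(2) by (intro sum.cong) (auto simp: S_def)
  finally show ?thesis .
qed

lemma prob_hits_misses:
  assumes "P \<subseteq> L" "Q \<subseteq> L" "P \<inter> Q = {}" "finite P" "finite Q"
  shows "prob {\<omega> \<in> space M. i \<omega> \<in> J \<and> (\<forall>s\<in>P. i \<omega> \<in> That s \<omega>) \<and> (\<forall>s\<in>Q. i \<omega> \<notin> That s \<omega>)}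
           = real T / real N * detection ^ card P * (1 - detection) ^ card Q"
    and "prob {\<omega> \<in> space M. (\<forall>s\<in>P. i \<omega> \<in> That s \<omega>) \<and> (\<forall>s\<in>Q. i \<omega> \<notin> That s \<omega>)}
           = real T / real N * detection ^ card P * (1 - detection) ^ card Q
             + (1 - real T / real N) * false_alarm ^ card P * (1 - false_alarm) ^ card Q"
proof -
  define f where "f j = 1 / real N * (hit_prob j ^ card P * (1 - hit_prob j) ^ card Q)" for j
  have sum_J: "(\<Sum>j\<in>J. f j) = real T / real N * detection ^ card P * (1 - detection) ^ card Q"
    using card_J by (simp add: f_def hit_prob_def)
  have "card ({1..N} - J) = N - T"
    using card_J J_subset by (simp add: card_Diff_subset finite_subset)
  then have sum_not_J: "(\<Sum>j\<in>{1..N} - J. f j)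
      = (1 - real T / real N) * false_alarm ^ card P * (1 - false_alarm) ^ card Q"
    using T_less_N by (simp add: f_def hit_prob_def of_nat_diff field_simps)
  show "prob {\<omega> \<in> space M. i \<omega> \<in> J \<and> (\<forall>s\<in>P. i \<omega> \<in> That s \<omega>) \<and> (\<forall>s\<in>Q. i \<omega> \<notin> That s \<omega>)}
           = real T / real N * detection ^ card P * (1 - detection) ^ card Q"
    using prob_index_in_hits_misses[OF J_subset assms] sum_J by (simp add: f_def)
  have "{\<omega> \<in> space M. (\<forall>s\<in>P. i \<omega> \<in> That s \<omega>) \<and> (\<forall>s\<in>Q. i \<omega> \<notin> That s \<omega>)}
      = {\<omega> \<in> space M. i \<omega> \<in> {1..N} \<and> (\<forall>s\<in>P. i \<omega> \<in> That s \<omega>) \<and> (\<forall>s\<in>Q. i \<omega> \<notin> That s \<omega>)}"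
    using index_range by blast
  also have "prob \<dots> = (\<Sum>j\<in>{1..N}. f j)"
    unfolding f_def by (rule prob_index_in_hits_misses[OF order_refl assms])
  also have "\<dots> = (\<Sum>j\<in>{1..N} - J. f j) + (\<Sum>j\<in>J. f j)"
    using J_subset by (intro sum.subset_diff) auto
  finally show "prob {\<omega> \<in> space M. (\<forall>s\<in>P. i \<omega> \<in> That s \<omega>) \<and> (\<forall>s\<in>Q. i \<omega> \<notin> That s \<omega>)}
      = real T / real N * detection ^ card P * (1 - detection) ^ card Q
        + (1 - real T / real N) * false_alarm ^ card P * (1 - false_alarm) ^ card Q"
    using sum_J sum_not_J by simp
qed

lemma cond_prob_support_hits_misses:
  assumes "P \<subseteq> L" "Q \<subseteq> L" "P \<inter> Q = {}" "finite P" "finite Q"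
  shows "\<P>(\<omega> in M. i \<omega> \<in> J \<bar> (\<forall>s\<in>P. i \<omega> \<in> That s \<omega>) \<and> (\<forall>s\<in>Q. i \<omega> \<notin> That s \<omega>))
           = bayes_posterior (real T / real N) detection false_alarm (card P) (card Q)"
  using prob_hits_misses[OF assms] by (simp add: cond_prob_def bayes_posterior_def)

end

theorem proposition3:
  fixes M :: "'w measure" and N T :: nat and \<epsilon> :: real
    and L :: "'s set" and J :: "nat set"
    and That :: "'s \<Rightarrow> 'w \<Rightarrow> nat set"
    and i :: "'w \<Rightarrow> nat"
    and p q :: "nat \<Rightarrow> 's" and h m :: nat
  assumes "prob_space M"
    and "1 \<le> T" and "T < N"
    and "finite L"
    and "J \<subseteq> {1..N}" and "card J = T"
    and "0 \<le> \<epsilon>" and "\<epsilon> \<le> real (N - T) / real N"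
    \<comment> \<open>estimated support sets are subsets of \<Omega>\<close>
    and "\<And>s \<omega>. s \<in> L \<Longrightarrow> \<omega> \<in> space M \<Longrightarrow> That s \<omega> \<subseteq> {1..N}"
    \<comment> \<open>detection / false-alarm probabilities (common support set J)\<close>
    and "\<And>s j. s \<in> L \<Longrightarrow> j \<in> J \<Longrightarrow>
           measure M {\<omega> \<in> space M. j \<in> That s \<omega>} = 1 - \<epsilon>"
    and "\<And>s j. s \<in> L \<Longrightarrow> j \<in> {1..N} - J \<Longrightarrow>
           measure M {\<omega> \<in> space M. j \<in> That s \<omega>} = real T / real (N - T) * \<epsilon>"
    \<comment> \<open>for fixed j, the events j in That s are mutually independent over sensors\<close>
    and "\<And>j. j \<in> {1..N} \<Longrightarrow>
           prob_space.indep_events M (\<lambda>s. {\<omega> \<in> space M. j \<in> That s \<omega>}) L"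
    \<comment> \<open>i is uniform on \<Omega>\<close>
    and "\<And>\<omega>. \<omega> \<in> space M \<Longrightarrow> i \<omega> \<in> {1..N}"
    and "\<And>j. j \<in> {1..N} \<Longrightarrow> measure M {\<omega> \<in> space M. i \<omega> = j} = 1 / real N"
    \<comment> \<open>i is independent of all estimates\<close>
    and "prob_space.indep_set M
           (sigma_sets (space M) {{\<omega> \<in> space M. i \<omega> = j} | j. j \<in> {1..N}})
           (sigma_sets (space M)
              {{\<omega> \<in> space M. j \<in> That s \<omega>} | s j. s \<in> L \<and> j \<in> {1..N}})"
    \<comment> \<open>distinct sensors p_1..p_h, q_1..q_(m+1)\<close>
    and "1 \<le> h"
    and "p ` {1..h} \<subseteq> L" and "q ` {1..m+1} \<subseteq> L"
    and "inj_on p {1..h}" and "inj_on q {1..m+1}"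
    and "p ` {1..h} \<inter> q ` {1..m+1} = {}"
    \<comment> \<open>conditioning events have positive probability\<close>
    and "\<P>(\<omega> in M. (\<forall>l\<in>{1..h}. i \<omega> \<in> That (p l) \<omega>) \<and>
                     (\<forall>l\<in>{1..m}. i \<omega> \<notin> That (q l) \<omega>)) > 0"
    and "\<P>(\<omega> in M. (\<forall>l\<in>{1..h-1}. i \<omega> \<in> That (p l) \<omega>) \<and>
                     (\<forall>l\<in>{1..m+1}. i \<omega> \<notin> That (q l) \<omega>)) > 0"
  shows "\<P>(\<omega> in M. i \<omega> \<in> J \<bar>
            (\<forall>l\<in>{1..h}. i \<omega> \<in> That (p l) \<omega>) \<and>
            (\<forall>l\<in>{1..m}. i \<omega> \<notin> That (q l) \<omega>))
         \<ge> \<P>(\<omega> in M. i \<omega> \<in> J \<bar>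
            (\<forall>l\<in>{1..h-1}. i \<omega> \<in> That (p l) \<omega>) \<and>
            (\<forall>l\<in>{1..m+1}. i \<omega> \<notin> That (q l) \<omega>))"
proof -
  interpret common_support_model M N T \<epsilon> L J That i
    using assms(1,3,5-8,10-15)
    by (simp add: common_support_model_def common_support_model_axioms_def)
  obtain h0 where h: "h = Suc h0"
    using \<open>1 \<le> h\<close> by (cases h) auto
  have reindex: "((\<forall>l\<in>A. x \<in> That (p l) \<omega>) \<and> (\<forall>l\<in>B. x \<notin> That (q l) \<omega>))
      \<longleftrightarrow> (\<forall>s\<in>p ` A. x \<in> That s \<omega>) \<and> (\<forall>s\<in>q ` B. x \<notin> That s \<omega>)" for A B x \<omega>
    by simp
  have sensors: "p ` A \<subseteq> L" "q ` B \<subseteq> L" "p ` A \<inter> q ` B = {}" "finite (p ` A)" "finite (q ` B)"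
    and cards: "card (p ` A) = card A" "card (q ` B) = card B"
    if A: "A \<subseteq> {1..h}" and B: "B \<subseteq> {1..m+1}" for A B
  proof -
    show "p ` A \<subseteq> L" "q ` B \<subseteq> L" "p ` A \<inter> q ` B = {}"
      using A B assms(17,18,21) by blast+
    show "finite (p ` A)" "finite (q ` B)"
      using finite_subset[OF A] finite_subset[OF B] by simp_all
    show "card (p ` A) = card A" "card (q ` B) = card B"
      using inj_on_subset[OF assms(19) A] inj_on_subset[OF assms(20) B] by (simp_all add: card_image)
  qed
  have "\<P>(\<omega> in M. (\<forall>s\<in>p ` {1..h}. i \<omega> \<in> That s \<omega>) \<and> (\<forall>s\<in>q ` {1..m}. i \<omega> \<notin> That s \<omega>)) > 0"
    using assms(22) unfolding reindex .
  then have "0 < real T / real N * detection ^ Suc h0 * (1 - detection) ^ m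
                 + (1 - real T / real N) * false_alarm ^ Suc h0 * (1 - false_alarm) ^ m"
    using prob_hits_misses(2)[OF sensors[of "{1..h}" "{1..m}"]] cards[of "{1..h}" "{1..m}"] h by simp
  then have "bayes_posterior (real T / real N) detection false_alarm h0 (Suc m)
      \<le> bayes_posterior (real T / real N) detection false_alarm (Suc h0) m"
    using false_alarm_nonneg false_alarm_le_detection detection_le_1 T_less_N
    by (intro bayes_posterior_hit_to_miss_le) auto
  then show ?thesis
    unfolding reindex
    using cond_prob_support_hits_misses[OF sensors[of "{1..h}" "{1..m}"]]
      cond_prob_support_hits_misses[OF sensors[of "{1..h-1}" "{1..m+1}"]]
      cards[of "{1..h}" "{1..m}"] cards[of "{1..h-1}" "{1..m+1}"] h
    by simp
qed

end
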